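(* Let $\mathcal{H}=\bigotimes_{i=1}^n\mathcal{H}_i$ with $\dim\mathcal{H}_i=d_i$. For every unitary $U\in U(d_1\cdots d_n)$ and every non-trivial unordered bipartition $p|q$ of $\{1,\dots,n\}$, $\epsilon_{p|q}(U)\le\tilde\epsilon_{p|q}$, and consequently $\epsilon_1(U)\le\tilde\epsilon_1:=\frac{1}{2^{n-1}-1}\sum_{p|q}\tilde\epsilon_{p|q}$, where $$\tilde\epsilon_{p|q}:=2-2\Bigg(\prod_{i=1}^n\frac{d_i}{d_i+1}\Bigg)\left[2^n-\sum_{x'|y'}\frac{\min(d_{px'},d_{qy'})-1}{\min(d_{px'},d_{qy'})}\right],$$ the sum being over all $2^n$ ordered bipartitions $x'|y'$ of $\{1',\dots,n'\}$ (including trivial ones), $d_{px'}=\prod_{i\in p}d_i\prod_{i'\in x'}d_i$ and $d_{qy'}=\prod_{i\in q}d_i\prod_{i'\in y'}d_i$.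
   Context: For a pure state $|\psi\rangle\in\mathcal{H}$ and a bipartition $p|q$ of $\{1,\dots,n\}$, $\tau_{p|q}(|\psi\rangle)=2\big(1-\operatorname{tr}[(\operatorname{tr}_p|\psi\rangle\langle\psi|)^2]\big)$; the $n$-party one-tangle is $\tau_1=\frac{1}{2^{n-1}-1}\sum_{p|q}\tau_{p|q}$ (sum over non-trivial unordered bipartitions). $\epsilon_{p|q}(U)$ (resp. $\epsilon_1(U)$) is the average of $\tau_{p|q}(U|\psi_{\rm sep}\rangle)$ (resp. $\tau_1(U|\psi_{\rm sep}\rangle)$) over $|\psi_{\rm sep}\rangle=|\psi_1\rangle\otimes\cdots\otimes|\psi_n\rangle$, each $|\psi_i\rangle$ drawn independently from the unitarily invariant measure on pure states of $\mathcal{H}_i$. The primed labels $1',\dots,n'$ refer to a copy $\mathcal{H}'=\bigotimes_i\mathcal{H}_{i'}$ of $\mathcal{H}$, $\dim\mathcal{H}_{i'}=d_i$. *)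

theory Defs
  imports "HOL-Probability.Probability"
begin

text \<open>Computational basis of H = H_1 (x) ... (x) H_n, dm H_i = d i:
  index tuples j with j i < d i for i < n (extensional outside {..<n}).\<close>
definition basis_idx :: "(nat \<Rightarrow> nat) \<Rightarrow> nat \<Rightarrow> (nat \<Rightarrow> nat) set" where
  "basis_idx d n = PiE {..<n} (\<lambda>i. {..<d i})"

text \<open>A unitary on H, given by its matrix entries U j k w.r.t. the product basis.\<close>
definition unitary_op :: "(nat \<Rightarrow> nat) \<Rightarrow> nat \<Rightarrow> ((nat \<Rightarrow> nat) \<Rightarrow> (nat \<Rightarrow> nat) \<Rightarrow> complex) \<Rightarrow> bool" where
  "unitary_op d n U \<longleftrightarrow> (\<forall>j\<in>basis_idx d n. \<forall>k\<in>basis_idx d n.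
     (\<Sum>l\<in>basis_idx d n. cnj (U l j) * U l k) = (if j = k then 1 else 0))"

definition apply_op :: "(nat \<Rightarrow> nat) \<Rightarrow> nat \<Rightarrow> ((nat \<Rightarrow> nat) \<Rightarrow> (nat \<Rightarrow> nat) \<Rightarrow> complex)
     \<Rightarrow> ((nat \<Rightarrow> nat) \<Rightarrow> complex) \<Rightarrow> ((nat \<Rightarrow> nat) \<Rightarrow> complex)" where
  "apply_op d n U \<psi> = (\<lambda>j. \<Sum>k\<in>basis_idx d n. U j k * \<psi> k)"

definition merge_idx :: "nat set \<Rightarrow> (nat \<Rightarrow> nat) \<Rightarrow> (nat \<Rightarrow> nat) \<Rightarrow> (nat \<Rightarrow> nat)" where
  "merge_idx p a b = (\<lambda>i. if i \<in> p then a i else b i)"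

text \<open>Matrix entries of tr_p |psi><psi| (an operator on the factors in q = {..<n} - p).\<close>
definition reduced_state :: "(nat \<Rightarrow> nat) \<Rightarrow> nat \<Rightarrow> nat set \<Rightarrow> ((nat \<Rightarrow> nat) \<Rightarrow> complex)
     \<Rightarrow> (nat \<Rightarrow> nat) \<Rightarrow> (nat \<Rightarrow> nat) \<Rightarrow> complex" where
  "reduced_state d n p \<psi> b b' =
     (\<Sum>a\<in>PiE p (\<lambda>i. {..<d i}). \<psi> (merge_idx p a b) * cnj (\<psi> (merge_idx p a b')))"

text \<open>tr[(tr_p |psi><psi|)^2] (real for any psi; we take the real part).\<close>
definition purity :: "(nat \<Rightarrow> nat) \<Rightarrow> nat \<Rightarrow> nat set \<Rightarrow> ((nat \<Rightarrow> nat) \<Rightarrow> complex) \<Rightarrow> real" where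
  "purity d n p \<psi> = Re (\<Sum>b\<in>PiE ({..<n} - p) (\<lambda>i. {..<d i}).
       \<Sum>b'\<in>PiE ({..<n} - p) (\<lambda>i. {..<d i}).
         reduced_state d n p \<psi> b b' * reduced_state d n p \<psi> b' b)"

definition tau_bip :: "(nat \<Rightarrow> nat) \<Rightarrow> nat \<Rightarrow> nat set \<Rightarrow> ((nat \<Rightarrow> nat) \<Rightarrow> complex) \<Rightarrow> real" where
  "tau_bip d n p \<psi> = 2 * (1 - purity d n p \<psi>)"

definition nontrivial_bip :: "nat \<Rightarrow> nat set \<Rightarrow> bool" where
  "nontrivial_bip n p \<longleftrightarrow> p \<subseteq> {..<n} \<and> p \<noteq> {} \<and> p \<noteq> {..<n}"

text \<open>Non-trivial unordered bipartitions p|q, each represented once by the part p containing 0.\<close>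
definition unordered_bips :: "nat \<Rightarrow> nat set set" where
  "unordered_bips n = {p. p \<subseteq> {..<n} \<and> 0 \<in> p \<and> p \<noteq> {..<n}}"

definition one_tangle :: "(nat \<Rightarrow> nat) \<Rightarrow> nat \<Rightarrow> ((nat \<Rightarrow> nat) \<Rightarrow> complex) \<Rightarrow> real" where
  "one_tangle d n \<psi> = (1 / (2 ^ (n - 1) - 1)) * (\<Sum>p\<in>unordered_bips n. tau_bip d n p \<psi>)"

text \<open>Pure states of C^dm as vectors nat => complex supported on {..<dm}.\<close>
definition unit_sphere_vec :: "nat \<Rightarrow> (nat \<Rightarrow> complex) set" where
  "unit_sphere_vec dm = {v. (\<forall>k\<ge>dm. v k = 0) \<and> (\<Sum>k<dm. (cmod (v k))\<^sup>2) = 1}"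

definition unitary_mat :: "nat \<Rightarrow> (nat \<Rightarrow> nat \<Rightarrow> complex) \<Rightarrow> bool" where
  "unitary_mat dm V \<longleftrightarrow> (\<forall>j<dm. \<forall>k<dm.
     (\<Sum>l<dm. cnj (V l j) * V l k) = (if j = k then 1 else 0))"

definition mat_apply :: "nat \<Rightarrow> (nat \<Rightarrow> nat \<Rightarrow> complex) \<Rightarrow> (nat \<Rightarrow> complex) \<Rightarrow> (nat \<Rightarrow> complex)" where
  "mat_apply dm V v = (\<lambda>k. if k < dm then \<Sum>l<dm. V k l * v l else 0)"

text \<open>mu is the unitarily invariant probability measure on pure states of C^dm:
  a Borel probability measure concentrated on the unit sphere and invariant under
  every unitary (such a measure exists and is unique).\<close>
definition unitarily_invariant_state_measure :: "nat \<Rightarrow> (nat \<Rightarrow> complex) measure \<Rightarrow> bool" where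
  "unitarily_invariant_state_measure dm \<mu> \<longleftrightarrow>
     prob_space \<mu> \<and> sets \<mu> = sets borel \<and> emeasure \<mu> (unit_sphere_vec dm) = 1 \<and>
     (\<forall>V. unitary_mat dm V \<longrightarrow> distr \<mu> borel (mat_apply dm V) = \<mu>)"

definition sep_state :: "nat \<Rightarrow> (nat \<Rightarrow> nat \<Rightarrow> complex) \<Rightarrow> ((nat \<Rightarrow> nat) \<Rightarrow> complex)" where
  "sep_state n \<omega> = (\<lambda>j. \<Prod>i<n. \<omega> i (j i))"

definition eps_bip :: "(nat \<Rightarrow> nat) \<Rightarrow> nat \<Rightarrow> (nat \<Rightarrow> (nat \<Rightarrow> complex) measure)
     \<Rightarrow> ((nat \<Rightarrow> nat) \<Rightarrow> (nat \<Rightarrow> nat) \<Rightarrow> complex) \<Rightarrow> nat set \<Rightarrow> real" where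
  "eps_bip d n M U p =
     (\<integral>\<omega>. tau_bip d n p (apply_op d n U (sep_state n \<omega>)) \<partial>(PiM {..<n} M))"

definition eps_one :: "(nat \<Rightarrow> nat) \<Rightarrow> nat \<Rightarrow> (nat \<Rightarrow> (nat \<Rightarrow> complex) measure)
     \<Rightarrow> ((nat \<Rightarrow> nat) \<Rightarrow> (nat \<Rightarrow> nat) \<Rightarrow> complex) \<Rightarrow> real" where
  "eps_one d n M U =
     (\<integral>\<omega>. one_tangle d n (apply_op d n U (sep_state n \<omega>)) \<partial>(PiM {..<n} M))"

text \<open>The bound tilde-epsilon_{p|q}; the sum runs over all subsets x' of {1',...,n'}
  (ordered bipartitions x'|y', y' the complement, trivial ones included).\<close>
definition eps_tilde_bip :: "(nat \<Rightarrow> nat) \<Rightarrow> nat \<Rightarrow> nat set \<Rightarrow> real" where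
  "eps_tilde_bip d n p =
     2 - 2 * (\<Prod>i<n. real (d i) / (real (d i) + 1)) *
       (2 ^ n - (\<Sum>x\<in>Pow {..<n}.
          let m = min ((\<Prod>i\<in>p. d i) * (\<Prod>i\<in>x. d i))
                      ((\<Prod>i\<in>{..<n} - p. d i) * (\<Prod>i\<in>{..<n} - x. d i))
          in (real m - 1) / real m))"

definition eps_tilde_one :: "(nat \<Rightarrow> nat) \<Rightarrow> nat \<Rightarrow> real" where
  "eps_tilde_one d n = (1 / (2 ^ (n - 1) - 1)) * (\<Sum>p\<in>unordered_bips n. eps_tilde_bip d n p)"

end

(*
  Expanding tr(rho_q^2) of U(psi_1 (x) ... (x) psi_n) makes the purity a polynomial of degree
  (2,2) in each psi_i, so its average only involves the fourth moments of the invariant measure,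
  E[v_a cnj(v_b) v_c cnj(v_e)] = ([a = b][c = e] + [a = e][c = b]) / (d (d + 1)); these follow
  from invariance under phases, permutations and a single Hadamard rotation, plus normalisation.
  Choosing one of the two pairings independently in every factor, i.e. a subset x of the parties,
  the average purity becomes prod_i 1/(d_i (d_i + 1)) times the sum over x of the purity of U,
  read as a vector of H (x) H', across the cut p x' | q y'. That reduced state has trace
  prod_i d_i and rank at most min(d_px', d_qy'), so Cauchy-Schwarz bounds its purity below by
  (prod_i d_i)^2 / min(d_px', d_qy'), which is exactly the bound defining eps_tilde_{p|q}.
*)

theory Submission
  imports Defs
begin

lemma four_sums_product:
  "sum A I * sum B J * sum C K * sum E L =
    (\<Sum>a\<in>I. \<Sum>b\<in>J. \<Sum>c\<in>K. \<Sum>e\<in>L. A a * B b * C c * (E e :: 'a :: comm_semiring_0))"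
  by (simp add: sum_distrib_left[symmetric] sum_distrib_right[symmetric])

lemma sum_if_eq_mult:
  "t < m \<Longrightarrow> (\<Sum>k<m. (if k = t then z else 0) * F k) = z * (F t :: 'a :: semiring_1)"
  for t m :: nat
  by (simp add: if_distrib[of "\<lambda>x. x * _"] cong: if_cong)

lemma sum_cnj_if_eq_mult:
  "t < m \<Longrightarrow> (\<Sum>k<m. cnj (if k = t then z else 0) * F k) = cnj z * F t"
  for t m :: nat
proof -
  have "cnj (if k = t then z else 0) = (if k = t then cnj z else 0)" for k by simp
  then show "t < m \<Longrightarrow> ?thesis" by (simp add: sum_if_eq_mult)
qed

lemma sum_lessThan_first_two:
  "2 \<le> m \<Longrightarrow> (\<Sum>l<m. f l) = f 0 + f 1 + (\<Sum>l\<in>{2..<m}. f l)"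
  for f :: "nat \<Rightarrow> 'a :: comm_monoid_add"
  by (simp add: atLeast0LessThan[symmetric] sum.atLeast_Suc_lessThan numeral_2_eq_2 add.assoc)

section \<open>Fourth moments of unitarily invariant random states\<close>

definition moment4 :: "(nat \<Rightarrow> complex) measure \<Rightarrow> nat \<Rightarrow> nat \<Rightarrow> nat \<Rightarrow> nat \<Rightarrow> complex" where
  "moment4 \<mu> a b c e = (\<integral>v. v a * cnj (v b) * v c * cnj (v e) \<partial>\<mu>)"

lemma borel_measurable_moment4_integrand [measurable]:
  "(\<lambda>v::nat \<Rightarrow> complex. v a * cnj (v b) * v c * cnj (v e)) \<in> borel_measurable borel"
  by (intro borel_measurable_continuous_onI continuous_intros continuous_on_product_coordinates)

lemma borel_measurable_mat_apply: "mat_apply dm V \<in> borel_measurable borel"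
  unfolding mat_apply_def by (rule measurable_coordinatewise_then_product) measurable

lemma unit_sphere_vec_norm_le_1:
  assumes v: "v \<in> unit_sphere_vec dm"
  shows "cmod (v k) \<le> 1"
proof (cases "k < dm")
  case True
  have "(cmod (v k))\<^sup>2 \<le> (\<Sum>k<dm. (cmod (v k))\<^sup>2)"
    using True by (intro member_le_sum) auto
  also have "\<dots> = 1" using v unfolding unit_sphere_vec_def by auto
  finally show ?thesis by (simp add: power_le_one_iff abs_le_square_iff)
qed (use v in \<open>auto simp: unit_sphere_vec_def\<close>)

lemma moment4_swap13: "moment4 \<mu> a b c e = moment4 \<mu> c b a e"
  unfolding moment4_def by (simp add: mult_ac)

lemma moment4_swap24: "moment4 \<mu> a b c e = moment4 \<mu> a e c b"
  unfolding moment4_def by (simp add: mult_ac)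

lemma moment4_cnj_swap: "moment4 \<mu> a b c e = cnj (moment4 \<mu> b a e c)"
proof -
  have "cnj (moment4 \<mu> b a e c) = (\<integral>v. cnj (v b * cnj (v a) * v e * cnj (v c)) \<partial>\<mu>)"
    unfolding moment4_def by (rule Bochner_Integration.integral_cnj[symmetric])
  also have "\<dots> = moment4 \<mu> a b c e"
    unfolding moment4_def by (simp del: Bochner_Integration.integral_cnj add: mult_ac)
  finally show ?thesis by simp
qed

context
  fixes dm :: nat and \<mu> :: "(nat \<Rightarrow> complex) measure"
  assumes invariant: "unitarily_invariant_state_measure dm \<mu>"
begin

interpretation prob_space \<mu>
  using invariant unfolding unitarily_invariant_state_measure_def by auto

lemma sets_invariant_measure [measurable_cong]: "sets \<mu> = sets borel"
  using invariant unfolding unitarily_invariant_state_measure_def by auto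

lemma AE_unit_sphere_vec: "AE v in \<mu>. v \<in> unit_sphere_vec dm"
proof -
  have "emeasure \<mu> (unit_sphere_vec dm) = 1"
    using invariant unfolding unitarily_invariant_state_measure_def by auto
  moreover then have "unit_sphere_vec dm \<in> sets \<mu>" using emeasure_notin_sets by fastforce
  ultimately show ?thesis by (simp add: AE_in_set_eq_1 emeasure_eq_measure)
qed

lemma integrable_moment4_integrand:
  "integrable \<mu> (\<lambda>v. v a * cnj (v b) * v c * cnj (v e))"
proof (rule integrable_const_bound[where B = 1])
  show "AE v in \<mu>. norm (v a * cnj (v b) * v c * cnj (v e)) \<le> 1"
    using AE_unit_sphere_vec
  proof eventually_elim
    case (elim v)
    have "cmod (v a) * cmod (v b) * cmod (v c) * cmod (v e) \<le> 1 * 1 * 1 * 1"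
      using unit_sphere_vec_norm_le_1[OF elim] by (intro mult_mono) auto
    then show ?case by (simp add: norm_mult)
  qed
qed measurable

lemma integral_mat_apply_invariant:
  assumes V: "unitary_mat dm V" and h: "h \<in> borel_measurable borel"
  shows "integral\<^sup>L \<mu> (\<lambda>v. h (mat_apply dm V v)) = (integral\<^sup>L \<mu> h :: complex)"
proof -
  have "distr \<mu> borel (mat_apply dm V) = \<mu>"
    using invariant V unfolding unitarily_invariant_state_measure_def by auto
  moreover have "mat_apply dm V \<in> measurable \<mu> borel"
    using borel_measurable_mat_apply by measurable
  ultimately show ?thesis by (metis integral_distr h)
qed

lemma moment4_unitary_expand:
  assumes V: "unitary_mat dm V" and abce: "a < dm" "b < dm" "c < dm" "e < dm"
  shows "moment4 \<mu> a b c e = (\<Sum>a'<dm. \<Sum>b'<dm. \<Sum>c'<dm. \<Sum>e'<dm.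
     V a a' * cnj (V b b') * V c c' * cnj (V e e') * moment4 \<mu> a' b' c' e')"
proof -
  have "moment4 \<mu> a b c e =
      (\<integral>v. (\<lambda>w. w a * cnj (w b) * w c * cnj (w e)) (mat_apply dm V v) \<partial>\<mu>)"
    unfolding moment4_def by (rule integral_mat_apply_invariant[OF V, symmetric]) measurable
  also have "\<dots> = (\<integral>v. (\<Sum>a'<dm. \<Sum>b'<dm. \<Sum>c'<dm. \<Sum>e'<dm.
      V a a' * cnj (V b b') * V c c' * cnj (V e e') * (v a' * cnj (v b') * v c' * cnj (v e'))) \<partial>\<mu>)"
    using abce by (simp add: mat_apply_def four_sums_product, simp add: mult_ac)
  also have "\<dots> = (\<Sum>a'<dm. \<Sum>b'<dm. \<Sum>c'<dm. \<Sum>e'<dm.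
      V a a' * cnj (V b b') * V c c' * cnj (V e e') * moment4 \<mu> a' b' c' e')"
    by (simp add: integrable_moment4_integrand moment4_def)
  finally show ?thesis .
qed

lemma unitary_mat_monomial:
  assumes \<sigma>: "bij_betw \<sigma> {..<dm} {..<dm}" and w: "\<And>l. l < dm \<Longrightarrow> cmod (w l) = 1"
  shows "unitary_mat dm (\<lambda>l k. if k = \<sigma> l then w l else 0)"
  unfolding unitary_mat_def
proof (intro allI impI)
  fix j k assume jk: "j < dm" "k < dm"
  have "j \<in> \<sigma> ` {..<dm}" using \<sigma> jk(1) by (simp add: bij_betw_imp_surj_on)
  then obtain l0 where l0: "l0 < dm" "\<sigma> l0 = j" by auto
  have summand: "cnj (if j = \<sigma> l then w l else 0) * (if k = \<sigma> l then w l else 0) =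
      (if l = l0 then (if j = k then 1 else 0) else 0)" if l: "l < dm" for l
  proof (cases "l = l0")
    case True
    have "cnj (w l0) * w l0 = 1"
      using w[OF l0(1)] by (simp add: complex_mult_cnj cmod_power2[symmetric] mult.commute)
    then show ?thesis using True l0 by simp
  next
    case False
    then have "\<sigma> l \<noteq> j" using \<sigma> l l0 by (auto simp: bij_betw_def dest: inj_onD)
    then show ?thesis using False by simp
  qed
  have "(\<Sum>l<dm. cnj (if j = \<sigma> l then w l else 0) * (if k = \<sigma> l then w l else 0))
      = (\<Sum>l<dm. if l = l0 then (if j = k then 1 else 0) else 0)"
    by (intro sum.cong refl) (simp add: summand)
  also have "\<dots> = (if j = k then 1 else 0)" using l0(1) by simp
  finally show "(\<Sum>l<dm. cnj (if j = \<sigma> l then w l else 0) * (if k = \<sigma> l then w l else 0))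
      = (if j = k then 1 else 0)" .
qed

lemma moment4_monomial:
  assumes \<sigma>: "bij_betw \<sigma> {..<dm} {..<dm}" and w: "\<And>l. l < dm \<Longrightarrow> cmod (w l) = 1"
    and abce: "a < dm" "b < dm" "c < dm" "e < dm"
  shows "moment4 \<mu> a b c e =
    w a * cnj (w b) * w c * cnj (w e) * moment4 \<mu> (\<sigma> a) (\<sigma> b) (\<sigma> c) (\<sigma> e)"
proof -
  define V where "V = (\<lambda>l k. if k = \<sigma> l then w l else (0::complex))"
  have V: "unitary_mat dm V" unfolding V_def by (rule unitary_mat_monomial[OF \<sigma> w])
  have \<sigma>_lt: "\<sigma> l < dm" if "l < dm" for l using \<sigma> that by (auto dest: bij_betw_apply)
  have "moment4 \<mu> a b c e = (\<Sum>a'<dm. V a a' * (\<Sum>b'<dm. cnj (V b b') *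
      (\<Sum>c'<dm. V c c' * (\<Sum>e'<dm. cnj (V e e') * moment4 \<mu> a' b' c' e'))))"
    by (subst moment4_unitary_expand[OF V abce]) (simp add: sum_distrib_left mult.assoc)
  also have "\<dots> = w a * cnj (w b) * w c * cnj (w e) * moment4 \<mu> (\<sigma> a) (\<sigma> b) (\<sigma> c) (\<sigma> e)"
    using abce \<sigma>_lt by (simp add: V_def sum_if_eq_mult sum_cnj_if_eq_mult mult.assoc)
  finally show ?thesis .
qed

lemma moment4_eq_0:
  assumes abce: "a < dm" "b < dm" "c < dm" "e < dm" and "a \<noteq> b" "a \<noteq> e"
  shows "moment4 \<mu> a b c e = 0"
proof -
  define \<theta> where "\<theta> k = (if k = a then \<i> else 1)" for k
  define f where "f = \<theta> a * cnj (\<theta> b) * \<theta> c * cnj (\<theta> e)"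
  have "cmod (\<theta> l) = 1" for l by (simp add: \<theta>_def)
  then have fixed: "moment4 \<mu> a b c e = f * moment4 \<mu> a b c e"
    using moment4_monomial[OF bij_betw_id _ abce, of \<theta>] by (simp add: f_def)
  have "f = (if c = a then -1 else \<i>)"
    using assms by (simp add: \<theta>_def f_def)
  then have "1 - f \<noteq> 0" by (simp add: complex_eq_iff)
  moreover have "(1 - f) * moment4 \<mu> a b c e = 0"
    using fixed by (simp add: algebra_simps)
  ultimately show ?thesis by simp
qed

lemma moment4_unpaired:
  assumes abce: "a < dm" "b < dm" "c < dm" "e < dm"
    and unpaired: "\<not> ((a = b \<and> c = e) \<or> (a = e \<and> c = b))"
  shows "moment4 \<mu> a b c e = 0"
proof -
  consider "a \<noteq> b \<and> a \<noteq> e" | "c \<noteq> b \<and> c \<noteq> e" | "b \<noteq> a \<and> b \<noteq> c" | "e \<noteq> a \<and> e \<noteq> c"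
    using unpaired by blast
  then show ?thesis
  proof cases
    case 1
    then show ?thesis using moment4_eq_0[OF abce] by auto
  next
    case 2
    then show ?thesis using moment4_eq_0[OF abce(3,2,1,4)] moment4_swap13[of \<mu> a b c e] by auto
  next
    case 3
    then show ?thesis using moment4_eq_0[OF abce(2,1,4,3)] moment4_cnj_swap[of \<mu> a b c e] by auto
  next
    case 4
    then show ?thesis
      using moment4_eq_0[OF abce(4,1,2,3)] moment4_cnj_swap[of \<mu> a e c b] moment4_swap24[of \<mu> a b c e]
      by auto
  qed
qed

lemma moment4_transpose:
  assumes "x < dm" "y < dm" "a < dm" "c < dm"
  shows "moment4 \<mu> a a c c = moment4 \<mu> (Transposition.transpose x y a) (Transposition.transpose x y a)
    (Transposition.transpose x y c) (Transposition.transpose x y c)"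
  using assms moment4_monomial[of "Transposition.transpose x y" "\<lambda>_. 1" a a c c] by simp

lemma moment4_diag: "a < dm \<Longrightarrow> moment4 \<mu> a a a a = moment4 \<mu> 0 0 0 0"
  using moment4_transpose[of a 0 a a] by simp

lemma moment4_offdiag:
  assumes "a < dm" "c < dm" "a \<noteq> c"
  shows "moment4 \<mu> a a c c = moment4 \<mu> 0 0 1 1"
proof -
  define g where "g = Transposition.transpose a 0 c"
  have "g \<noteq> 0" "g < dm" "1 < dm" using assms by (auto simp: g_def Transposition.transpose_def)
  have "moment4 \<mu> a a c c = moment4 \<mu> 0 0 g g"
    using assms moment4_transpose[of a 0 a c] by (simp add: g_def)
  also have "\<dots> = moment4 \<mu> 0 0 1 1"
    using moment4_transpose[of g 1 0 g] \<open>g \<noteq> 0\<close> \<open>g < dm\<close> \<open>1 < dm\<close> by simp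
  finally show ?thesis .
qed

lemma moment4_hadamard:
  assumes "2 \<le> dm"
  shows "moment4 \<mu> 0 0 0 0 = 2 * moment4 \<mu> 0 0 1 1"
proof -
  define s :: complex where "s = of_real (1 / sqrt 2)"
  have ss: "s * s = 1 / 2"
    unfolding s_def of_real_mult[symmetric] by (simp add: divide_simps)
  have cs: "cnj s = s" by (simp add: s_def)
  define V :: "nat \<Rightarrow> nat \<Rightarrow> complex" where
    "V l k = (if l < 2 \<and> k < 2 then (if l = 1 \<and> k = 1 then - s else s) else of_bool (l = k))" for l k
  have "unitary_mat dm V"
    unfolding unitary_mat_def
  proof (intro allI impI)
    fix j k assume jk: "j < dm" "k < dm"
    have "(\<Sum>l\<in>{2..<dm}. cnj (V l j) * V l k) = (\<Sum>l\<in>{2..<dm}. if l = j then of_bool (j = k) else 0)"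
      by (intro sum.cong refl) (auto simp: V_def)
    also have "\<dots> = of_bool (j = k \<and> 2 \<le> j)" using jk by auto
    finally show "(\<Sum>l<dm. cnj (V l j) * V l k) = (if j = k then 1 else 0)"
      unfolding sum_lessThan_first_two[OF assms]
      by (cases "j = 0"; cases "j = 1"; cases "k = 0"; cases "k = 1") (auto simp: V_def cs ss)
  qed
  have row0: "(\<Sum>x<dm. V 0 x * F x) = s * (\<Sum>x<2. F x)" for F
    using assms by (simp add: sum_lessThan_first_two V_def algebra_simps)
  have cnj_row0: "(\<Sum>x<dm. cnj (V 0 x) * F x) = s * (\<Sum>x<2. F x)" for F
    using assms by (simp add: sum_lessThan_first_two V_def cs algebra_simps)
  have "moment4 \<mu> 0 0 0 0 = (\<Sum>a<dm. V 0 a * (\<Sum>b<dm. cnj (V 0 b) *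
      (\<Sum>c<dm. V 0 c * (\<Sum>e<dm. cnj (V 0 e) * moment4 \<mu> a b c e))))"
    using assms
    by (subst moment4_unitary_expand[OF \<open>unitary_mat dm V\<close>]) (simp_all add: sum_distrib_left mult.assoc)
  also have "\<dots> = (s * s) * (s * s) *
      (\<Sum>a<2. \<Sum>b<2. \<Sum>c<2. \<Sum>e<2. moment4 \<mu> a b c e)"
    by (simp only: row0 cnj_row0) (simp add: sum_distrib_left mult_ac)
  also have "(\<Sum>a<2. \<Sum>b<2. \<Sum>c<2. \<Sum>e<2. moment4 \<mu> a b c e) =
      2 * moment4 \<mu> 0 0 0 0 + 4 * moment4 \<mu> 0 0 1 1"
    using assms moment4_swap24[of \<mu> 0 1 1 0] moment4_swap24[of \<mu> 1 0 0 1]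
      moment4_offdiag[of 1 0] moment4_diag[of 1]
    by (simp add: numeral_2_eq_2 moment4_unpaired)
  finally show ?thesis by (simp add: ss field_simps)
qed

lemma moment4_normalized: "(\<Sum>a<dm. \<Sum>c<dm. moment4 \<mu> a a c c) = 1"
proof -
  have "(\<Sum>a<dm. \<Sum>c<dm. moment4 \<mu> a a c c) =
      (\<integral>v. (\<Sum>a<dm. \<Sum>c<dm. v a * cnj (v a) * v c * cnj (v c)) \<partial>\<mu>)"
    by (simp add: moment4_def integrable_moment4_integrand)
  also have "\<dots> = (\<integral>v. 1 \<partial>\<mu>)"
  proof (rule integral_cong_AE)
    show "AE v in \<mu>. (\<Sum>a<dm. \<Sum>c<dm. v a * cnj (v a) * v c * cnj (v c)) = 1"
      using AE_unit_sphere_vec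
    proof eventually_elim
      case (elim v)
      have "(\<Sum>a<dm. v a * cnj (v a)) = of_real (\<Sum>a<dm. (cmod (v a))\<^sup>2)"
        by (simp add: complex_mult_cnj cmod_power2)
      also have "\<dots> = 1" using elim unfolding unit_sphere_vec_def by simp
      finally show ?case by (simp add: sum_product mult.assoc flip: sum_distrib_left)
    qed
  qed measurable
  finally show ?thesis by (simp add: prob_space)
qed

lemma moment4_sq_formula:
  assumes "a < dm" "c < dm"
  shows "moment4 \<mu> a a c c = (1 + of_bool (a = c)) / (of_nat dm * (of_nat dm + 1))"
proof (cases "dm = 1")
  case True
  then show ?thesis using assms moment4_normalized by simp
next
  case False
  with assms(1) have "2 \<le> dm" by simp
  define q where "q = moment4 \<mu> 0 0 1 1"
  have q: "moment4 \<mu> x x y y = q * (1 + of_bool (x = y))" if "x < dm" "y < dm" for x y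
  proof (cases "x = y")
    case True
    then show ?thesis
      using \<open>2 \<le> dm\<close> moment4_diag[OF that(1)] moment4_hadamard by (simp add: q_def)
  qed (use moment4_offdiag[OF that] q_def in simp)
  have "(\<Sum>y<dm. 1 + of_bool (x = y)) = of_nat dm + (1 :: complex)" if "x < dm" for x
    using that by (simp add: sum.distrib)
  then have "1 = q * (of_nat dm * (of_nat dm + 1))"
    using moment4_normalized by (simp add: q sum_distrib_left[symmetric] mult_ac)
  moreover have "(of_nat dm * (of_nat dm + 1) :: complex) \<noteq> 0"
    using \<open>2 \<le> dm\<close> by (simp only: add.commute[of _ 1] of_nat_Suc[symmetric] of_nat_mult[symmetric]
      of_nat_eq_0_iff) simp
  ultimately show ?thesis using q[OF assms] by (simp add: field_simps)
qed

lemma moment4_formula: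
  assumes abce: "a < dm" "b < dm" "c < dm" "e < dm"
  shows "moment4 \<mu> a b c e =
    (of_bool (a = b \<and> c = e) + of_bool (a = e \<and> c = b)) / (of_nat dm * (of_nat dm + 1))"
proof -
  consider "b = a" "e = c" | "b = c" "e = a" | "\<not> ((a = b \<and> c = e) \<or> (a = e \<and> c = b))"
    by auto
  then show ?thesis
  proof cases
    case 1
    show ?thesis unfolding 1 using assms moment4_sq_formula[of a c] by (cases "a = c") auto
  next
    case 2
    show ?thesis
      unfolding 2 using assms moment4_sq_formula[of a c] moment4_swap24[of \<mu> a c c a]
      by (cases "a = c") auto
  next
    case 3
    then have "moment4 \<mu> a b c e = 0" by (rule moment4_unpaired[OF abce])
    moreover have "of_bool (a = b \<and> c = e) = (0 :: complex)" "of_bool (a = e \<and> c = b) = (0 :: complex)"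
      using 3 unfolding of_bool_eq_0_iff by blast+
    ultimately show ?thesis by (simp only:) simp
  qed
qed

end

section \<open>Index tuples of the product basis\<close>

definition basis_on :: "(nat \<Rightarrow> nat) \<Rightarrow> nat set \<Rightarrow> (nat \<Rightarrow> nat) set" where
  "basis_on d S = PiE S (\<lambda>i. {..<d i})"

lemma finite_basis_on [simp]: "finite S \<Longrightarrow> finite (basis_on d S)"
  by (simp add: basis_on_def finite_PiE)

lemma card_basis_on: "finite S \<Longrightarrow> card (basis_on d S) = (\<Prod>i\<in>S. d i)"
  by (simp add: basis_on_def card_PiE)

lemma basis_idx_eq_basis_on: "basis_idx d n = basis_on d {..<n}"
  by (simp add: basis_idx_def basis_on_def)

lemma basis_on_undefined: "k \<in> basis_on d S \<Longrightarrow> i \<notin> S \<Longrightarrow> k i = undefined"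
  unfolding basis_on_def by (rule PiE_arb)

lemma basis_on_less: "k \<in> basis_on d S \<Longrightarrow> i \<in> S \<Longrightarrow> k i < d i"
  unfolding basis_on_def by auto

lemma merge_idx_in_basis_on:
  "s \<in> basis_on d x \<Longrightarrow> t \<in> basis_on d (I - x) \<Longrightarrow> x \<subseteq> I \<Longrightarrow> merge_idx x s t \<in> basis_on d I"
  unfolding basis_on_def merge_idx_def by (auto simp: PiE_iff extensional_def)

lemma merge_idx_in_basis_on':
  "k \<in> basis_on d I \<Longrightarrow> k' \<in> basis_on d I \<Longrightarrow> x \<subseteq> I \<Longrightarrow> merge_idx x k k' \<in> basis_on d I"
  unfolding basis_on_def merge_idx_def by (auto simp: PiE_iff extensional_def)

lemma merge_idx_merge_idx: "merge_idx x (merge_idx x s t) (merge_idx x s' t') = merge_idx x s t'"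
  by (simp add: merge_idx_def fun_eq_iff)

lemma bij_betw_merge_idx:
  assumes "x \<subseteq> I"
  shows "bij_betw (\<lambda>(s, t). merge_idx x s t) (basis_on d x \<times> basis_on d (I - x)) (basis_on d I)"
proof (rule bij_betw_byWitness[where f' = "\<lambda>k. (restrict k x, restrict k (I - x))"])
  show "\<forall>k\<in>basis_on d I. (\<lambda>(s, t). merge_idx x s t) (restrict k x, restrict k (I - x)) = k"
    using assms by (auto simp: merge_idx_def fun_eq_iff basis_on_undefined)
  show "\<forall>st\<in>basis_on d x \<times> basis_on d (I - x).
      (\<lambda>k. (restrict k x, restrict k (I - x))) ((\<lambda>(s, t). merge_idx x s t) st) = st"
    by (auto simp: merge_idx_def fun_eq_iff basis_on_undefined)
  show "(\<lambda>(s, t). merge_idx x s t) ` (basis_on d x \<times> basis_on d (I - x)) \<subseteq> basis_on d I"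
    using assms by (auto intro: merge_idx_in_basis_on)
  show "(\<lambda>k. (restrict k x, restrict k (I - x))) ` basis_on d I \<subseteq> basis_on d x \<times> basis_on d (I - x)"
    using assms by (auto simp: basis_on_def PiE_iff)
qed

lemma sum_basis_on_split:
  assumes "x \<subseteq> I"
  shows "(\<Sum>k\<in>basis_on d I. g k) = (\<Sum>s\<in>basis_on d x. \<Sum>t\<in>basis_on d (I - x). g (merge_idx x s t))"
  using sum.reindex_bij_betw[OF bij_betw_merge_idx[OF assms], of g]
  by (simp add: sum.cartesian_product split_def)

section \<open>Purity bounds\<close>

lemma sum_diag_le_sum:
  fixes c :: "'b \<Rightarrow> 'b \<Rightarrow> 't \<Rightarrow> 't \<Rightarrow> real"
  assumes "finite B" "finite T" "\<And>b b' t t'. c b b' t t' \<ge> 0"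
  shows "(\<Sum>b\<in>B. \<Sum>t\<in>T. c b b t t) \<le> (\<Sum>b\<in>B. \<Sum>b'\<in>B. \<Sum>t\<in>T. \<Sum>t'\<in>T. c b b' t t')"
proof (rule sum_mono)
  fix b assume b: "b \<in> B"
  have "(\<Sum>t\<in>T. c b b t t) \<le> (\<Sum>t\<in>T. \<Sum>t'\<in>T. c b b t t')"
    using assms by (intro sum_mono member_le_sum) auto
  also have "\<dots> \<le> (\<Sum>b'\<in>B. \<Sum>t\<in>T. \<Sum>t'\<in>T. c b b' t t')"
    using b assms by (intro member_le_sum[where f = "\<lambda>b'. \<Sum>t\<in>T. \<Sum>t'\<in>T. c b b' t t'"] sum_nonneg) auto
  finally show "(\<Sum>t\<in>T. c b b t t) \<le> (\<Sum>b'\<in>B. \<Sum>t\<in>T. \<Sum>t'\<in>T. c b b' t t')" .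
qed

text \<open>Viewing f as a vector of a bipartite space with rows (a, s) and columns (b, t), the
  eightfold sum below is the purity tr (rho^2) of its reduced matrix
  rho (b, t) (b', t') = (SUM a s. f a s b t * cnj (f a s b' t')). By Cauchy-Schwarz it is at
  least (tr rho)^2 divided by the dimension of either side.\<close>

lemma purity_lower_bound_cols:
  fixes f :: "'a \<Rightarrow> 's \<Rightarrow> 'b \<Rightarrow> 't \<Rightarrow> complex"
  assumes fin: "finite A" "finite S" "finite B" "finite T"
  shows "(\<Sum>b\<in>B. \<Sum>t\<in>T. \<Sum>a\<in>A. \<Sum>s\<in>S. (cmod (f a s b t))\<^sup>2)\<^sup>2 / (card B * card T) \<le>
    Re (\<Sum>b\<in>B. \<Sum>b'\<in>B. \<Sum>t1\<in>T. \<Sum>t3\<in>T. \<Sum>a\<in>A. \<Sum>a'\<in>A. \<Sum>s1\<in>S. \<Sum>s3\<in>S.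
      f a s1 b t1 * cnj (f a s1 b' t3) * f a' s3 b' t3 * cnj (f a' s3 b t1))"
proof -
  define \<rho> where "\<rho> b t b' t' = (\<Sum>a\<in>A. \<Sum>s\<in>S. f a s b t * cnj (f a s b' t'))" for b t b' t'
  define r where "r b t = (\<Sum>a\<in>A. \<Sum>s\<in>S. (cmod (f a s b t))\<^sup>2)" for b t
  have norm_sq: "z * cnj z = complex_of_real ((cmod z)\<^sup>2)" for z
    by (simp add: complex_mult_cnj cmod_power2)
  have expand: "\<rho> b t1 b' t3 * cnj (\<rho> b t1 b' t3) = (\<Sum>a\<in>A. \<Sum>a'\<in>A. \<Sum>s1\<in>S. \<Sum>s3\<in>S.
      f a s1 b t1 * cnj (f a s1 b' t3) * f a' s3 b' t3 * cnj (f a' s3 b t1))" for b t1 b' t3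
    unfolding \<rho>_def cnj_sum complex_cnj_mult complex_cnj_cnj sum_product by (simp add: mult_ac)
  have "Re (\<Sum>b\<in>B. \<Sum>b'\<in>B. \<Sum>t1\<in>T. \<Sum>t3\<in>T. \<Sum>a\<in>A. \<Sum>a'\<in>A. \<Sum>s1\<in>S. \<Sum>s3\<in>S.
      f a s1 b t1 * cnj (f a s1 b' t3) * f a' s3 b' t3 * cnj (f a' s3 b t1))
    = (\<Sum>b\<in>B. \<Sum>b'\<in>B. \<Sum>t1\<in>T. \<Sum>t3\<in>T. (cmod (\<rho> b t1 b' t3))\<^sup>2)"
    by (simp add: expand[symmetric] norm_sq Re_sum)
  also have "\<dots> \<ge> (\<Sum>b\<in>B. \<Sum>t\<in>T. (cmod (\<rho> b t b t))\<^sup>2)"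
    by (rule sum_diag_le_sum[OF fin(3,4)]) simp
  moreover have "\<rho> b t b t = complex_of_real (r b t)" for b t
    by (simp add: \<rho>_def r_def norm_sq)
  moreover have "r b t \<ge> 0" for b t unfolding r_def by (intro sum_nonneg) auto
  ultimately have purity_ge: "(\<Sum>b\<in>B. \<Sum>t\<in>T. (r b t)\<^sup>2) \<le>
      Re (\<Sum>b\<in>B. \<Sum>b'\<in>B. \<Sum>t1\<in>T. \<Sum>t3\<in>T. \<Sum>a\<in>A. \<Sum>a'\<in>A. \<Sum>s1\<in>S. \<Sum>s3\<in>S.
      f a s1 b t1 * cnj (f a s1 b' t3) * f a' s3 b' t3 * cnj (f a' s3 b t1))"
    by simp
  have "(\<Sum>b\<in>B. \<Sum>t\<in>T. r b t)\<^sup>2 \<le> (\<Sum>b\<in>B. \<Sum>t\<in>T. (r b t)\<^sup>2) * (card B * card T)"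
    using sum_squared_le_sum_of_squares[of "\<lambda>z. r (fst z) (snd z)" "B \<times> T"]
    by (simp add: sum.cartesian_product split_def card_cartesian_product)
  then have "(\<Sum>b\<in>B. \<Sum>t\<in>T. r b t)\<^sup>2 / (card B * card T) \<le> (\<Sum>b\<in>B. \<Sum>t\<in>T. (r b t)\<^sup>2)"
    by (cases "card B * card T = 0") (auto simp: divide_le_eq intro!: sum_nonneg)
  with purity_ge show ?thesis unfolding r_def by linarith
qed

lemma purity_lower_bound_rows:
  fixes f :: "'a \<Rightarrow> 's \<Rightarrow> 'b \<Rightarrow> 't \<Rightarrow> complex"
  assumes fin: "finite A" "finite S" "finite B" "finite T"
  shows "(\<Sum>b\<in>B. \<Sum>t\<in>T. \<Sum>a\<in>A. \<Sum>s\<in>S. (cmod (f a s b t))\<^sup>2)\<^sup>2 / (card A * card S) \<le>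
    Re (\<Sum>b\<in>B. \<Sum>b'\<in>B. \<Sum>t1\<in>T. \<Sum>t3\<in>T. \<Sum>a\<in>A. \<Sum>a'\<in>A. \<Sum>s1\<in>S. \<Sum>s3\<in>S.
      f a s1 b t1 * cnj (f a s1 b' t3) * f a' s3 b' t3 * cnj (f a' s3 b t1))"
proof -
  note swaps = sum.swap[of _ A B] sum.swap[of _ A T] sum.swap[of _ S B] sum.swap[of _ S T]
  have "(\<Sum>a\<in>A. \<Sum>s\<in>S. \<Sum>b\<in>B. \<Sum>t\<in>T. (cmod (cnj (f a s b t)))\<^sup>2)\<^sup>2 / (card A * card S) \<le>
    Re (\<Sum>a\<in>A. \<Sum>a'\<in>A. \<Sum>s1\<in>S. \<Sum>s3\<in>S. \<Sum>b\<in>B. \<Sum>b'\<in>B. \<Sum>t1\<in>T. \<Sum>t3\<in>T.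
      cnj (f a s1 b t1) * cnj (cnj (f a' s3 b t1)) * cnj (f a' s3 b' t3) * cnj (cnj (f a s1 b' t3)))"
    by (rule purity_lower_bound_cols[OF fin(3,4,1,2), where f = "\<lambda>b t a s. cnj (f a s b t)"])
  also have "\<dots> = Re (cnj (\<Sum>a\<in>A. \<Sum>a'\<in>A. \<Sum>s1\<in>S. \<Sum>s3\<in>S. \<Sum>b\<in>B. \<Sum>b'\<in>B. \<Sum>t1\<in>T. \<Sum>t3\<in>T.
      f a s1 b t1 * cnj (f a s1 b' t3) * f a' s3 b' t3 * cnj (f a' s3 b t1)))"
    by (simp add: mult_ac)
  also have "\<dots> = Re (\<Sum>b\<in>B. \<Sum>b'\<in>B. \<Sum>t1\<in>T. \<Sum>t3\<in>T. \<Sum>a\<in>A. \<Sum>a'\<in>A. \<Sum>s1\<in>S. \<Sum>s3\<in>S.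
      f a s1 b t1 * cnj (f a s1 b' t3) * f a' s3 b' t3 * cnj (f a' s3 b t1))"
    by (simp only: cnj.simps(1) swaps)
  finally show ?thesis by (simp only: complex_mod_cnj swaps)
qed

lemma purity_lower_bound:
  fixes f :: "'a \<Rightarrow> 's \<Rightarrow> 'b \<Rightarrow> 't \<Rightarrow> complex"
  assumes "finite A" "finite S" "finite B" "finite T"
  shows "(\<Sum>b\<in>B. \<Sum>t\<in>T. \<Sum>a\<in>A. \<Sum>s\<in>S. (cmod (f a s b t))\<^sup>2)\<^sup>2 /
      min (card A * card S) (card B * card T) \<le>
    Re (\<Sum>b\<in>B. \<Sum>b'\<in>B. \<Sum>t1\<in>T. \<Sum>t3\<in>T. \<Sum>a\<in>A. \<Sum>a'\<in>A. \<Sum>s1\<in>S. \<Sum>s3\<in>S.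
      f a s1 b t1 * cnj (f a s1 b' t3) * f a' s3 b' t3 * cnj (f a' s3 b t1))"
  using purity_lower_bound_cols[OF assms, of f] purity_lower_bound_rows[OF assms, of f]
  by (cases "card A * card S \<le> card B * card T") (simp_all add: min_def)

lemma purity_expand:
  "purity d n p \<psi> = Re (\<Sum>b\<in>basis_on d ({..<n} - p). \<Sum>b'\<in>basis_on d ({..<n} - p).
     \<Sum>a\<in>basis_on d p. \<Sum>a'\<in>basis_on d p.
     \<psi> (merge_idx p a b) * cnj (\<psi> (merge_idx p a b')) * \<psi> (merge_idx p a' b') * cnj (\<psi> (merge_idx p a' b)))"
  unfolding purity_def reduced_state_def basis_on_def sum_product by (simp add: mult.assoc)

lemma unitary_op_frobenius:
  assumes U: "unitary_op d n U"
  shows "(\<Sum>j\<in>basis_on d {..<n}. \<Sum>k\<in>basis_on d {..<n}. (cmod (U j k))\<^sup>2) = (\<Prod>i<n. real (d i))"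
proof -
  have column: "(\<Sum>j\<in>basis_on d {..<n}. (cmod (U j k))\<^sup>2) = 1" if "k \<in> basis_on d {..<n}" for k
  proof -
    have "(\<Sum>j\<in>basis_on d {..<n}. cnj (U j k) * U j k) = 1"
      using U that unfolding unitary_op_def basis_idx_eq_basis_on by auto
    then have "complex_of_real (\<Sum>j\<in>basis_on d {..<n}. (cmod (U j k))\<^sup>2) = 1"
      by (simp add: complex_mult_cnj cmod_power2 mult.commute)
    then show ?thesis by (simp only: of_real_eq_1_iff)
  qed
  have "(\<Sum>j\<in>basis_on d {..<n}. \<Sum>k\<in>basis_on d {..<n}. (cmod (U j k))\<^sup>2) =
      (\<Sum>k\<in>basis_on d {..<n}. \<Sum>j\<in>basis_on d {..<n}. (cmod (U j k))\<^sup>2)"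
    by (rule sum.swap)
  also have "\<dots> = card (basis_on d {..<n})" by (simp add: column)
  finally show ?thesis by (simp add: card_basis_on)
qed

text \<open>The purity of U, regarded as a vector of the doubled space H \<otimes> H', across the cut
  between the parties p \<union> x' and ({..<n} - p) \<union> ({..<n} - x)'.\<close>

definition operator_purity :: "(nat \<Rightarrow> nat) \<Rightarrow> nat
    \<Rightarrow> ((nat \<Rightarrow> nat) \<Rightarrow> (nat \<Rightarrow> nat) \<Rightarrow> complex) \<Rightarrow> nat set \<Rightarrow> nat set \<Rightarrow> complex" where
  "operator_purity d n U p x =
    (\<Sum>b\<in>basis_on d ({..<n} - p). \<Sum>b'\<in>basis_on d ({..<n} - p). \<Sum>a\<in>basis_on d p. \<Sum>a'\<in>basis_on d p.
     \<Sum>k1\<in>basis_on d {..<n}. \<Sum>k3\<in>basis_on d {..<n}.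
      U (merge_idx p a b) k1 * cnj (U (merge_idx p a b') (merge_idx x k1 k3)) *
      U (merge_idx p a' b') k3 * cnj (U (merge_idx p a' b) (merge_idx x k3 k1)))"

definition cut_dim :: "(nat \<Rightarrow> nat) \<Rightarrow> nat \<Rightarrow> nat set \<Rightarrow> nat set \<Rightarrow> nat" where
  "cut_dim d n p x = min ((\<Prod>i\<in>p. d i) * (\<Prod>i\<in>x. d i)) ((\<Prod>i\<in>{..<n} - p. d i) * (\<Prod>i\<in>{..<n} - x. d i))"

lemma cut_dim_pos:
  assumes "\<And>i. i < n \<Longrightarrow> 1 \<le> d i" "p \<subseteq> {..<n}" "x \<subseteq> {..<n}"
  shows "1 \<le> cut_dim d n p x"
proof -
  have "1 \<le> (\<Prod>i\<in>S. d i)" if "S \<subseteq> {..<n}" for S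
    using that assms(1) by (intro prod_ge_1) auto
  then show ?thesis
    unfolding cut_dim_def using assms(2,3) by (auto intro!: one_le_mult_iff[THEN iffD2])
qed

lemma operator_purity_lower_bound:
  assumes U: "unitary_op d n U" and p: "p \<subseteq> {..<n}" and x: "x \<subseteq> {..<n}"
  shows "(\<Prod>i<n. real (d i))\<^sup>2 /
      real (cut_dim d n p x)
    \<le> Re (operator_purity d n U p x)"
proof -
  let ?Bq = "basis_on d ({..<n} - p)" and ?Bp = "basis_on d p"
  let ?Bx = "basis_on d x" and ?By = "basis_on d ({..<n} - x)" and ?B = "basis_on d {..<n}"
  define f where "f a s b t = U (merge_idx p a b) (merge_idx x s t)" for a s b t
  have fin: "finite p" "finite x" using p x by (auto intro: finite_subset)
  note swaps = sum.swap[of _ ?By ?Bq] sum.swap[of _ ?Bp ?Bq] sum.swap[of _ ?Bx ?Bq]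
    sum.swap[of _ ?Bp ?By] sum.swap[of _ ?Bx ?By] sum.swap[of _ ?Bx ?Bp]
  have purity: "operator_purity d n U p x =
    (\<Sum>b\<in>?Bq. \<Sum>b'\<in>?Bq. \<Sum>t1\<in>?By. \<Sum>t3\<in>?By. \<Sum>a\<in>?Bp. \<Sum>a'\<in>?Bp. \<Sum>s1\<in>?Bx. \<Sum>s3\<in>?Bx.
      f a s1 b t1 * cnj (f a s1 b' t3) * f a' s3 b' t3 * cnj (f a' s3 b t1))"
    unfolding operator_purity_def sum_basis_on_split[OF x] merge_idx_merge_idx f_def
    by (simp only: swaps)
  have "(\<Sum>b\<in>?Bq. \<Sum>t\<in>?By. \<Sum>a\<in>?Bp. \<Sum>s\<in>?Bx. (cmod (f a s b t))\<^sup>2) =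
      (\<Sum>a\<in>?Bp. \<Sum>b\<in>?Bq. \<Sum>s\<in>?Bx. \<Sum>t\<in>?By. (cmod (U (merge_idx p a b) (merge_idx x s t)))\<^sup>2)"
    unfolding f_def by (simp only: swaps)
  also have "\<dots> = (\<Sum>j\<in>?B. \<Sum>s\<in>?Bx. \<Sum>t\<in>?By. (cmod (U j (merge_idx x s t)))\<^sup>2)"
    by (rule sum_basis_on_split[OF p, symmetric])
  also have "\<dots> = (\<Sum>j\<in>?B. \<Sum>k\<in>?B. (cmod (U j k))\<^sup>2)"
    by (intro sum.cong refl sum_basis_on_split[OF x, symmetric])
  also have "\<dots> = (\<Prod>i<n. real (d i))"
    by (rule unitary_op_frobenius[OF U])
  finally have norm: "(\<Sum>b\<in>?Bq. \<Sum>t\<in>?By. \<Sum>a\<in>?Bp. \<Sum>s\<in>?Bx. (cmod (f a s b t))\<^sup>2) =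
      (\<Prod>i<n. real (d i))" .
  have cards: "card ?Bp * card ?Bx = (\<Prod>i\<in>p. d i) * (\<Prod>i\<in>x. d i)"
    "card ?Bq * card ?By = (\<Prod>i\<in>{..<n} - p. d i) * (\<Prod>i\<in>{..<n} - x. d i)"
    using fin by (simp_all add: card_basis_on)
  show ?thesis
    using purity_lower_bound[of ?Bp ?Bx ?Bq ?By f] fin unfolding purity[symmetric] norm cards cut_dim_def by simp
qed

section \<open>Average purity of transformed product states\<close>

lemma integral_PiM_prod:
  fixes M :: "nat \<Rightarrow> 'a measure" and g :: "nat \<Rightarrow> 'a \<Rightarrow> complex"
  assumes prob: "\<And>i. i < n \<Longrightarrow> prob_space (M i)"
    and int: "\<And>i. i < n \<Longrightarrow> integrable (M i) (g i)"
  shows "integrable (PiM {..<n} M) (\<lambda>\<omega>. \<Prod>i<n. g i (\<omega> i))"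
    and "(\<integral>\<omega>. (\<Prod>i<n. g i (\<omega> i)) \<partial>PiM {..<n} M) = (\<Prod>i<n. integral\<^sup>L (M i) (g i))"
proof -
  \<comment> \<open>Outside the index set the factors are irrelevant; replace them by a finite space so
     that the whole family is sigma-finite.\<close>
  define M' where "M' i = (if i < n then M i else count_space {undefined})" for i
  have PiM_eq: "PiM {..<n} M = PiM {..<n} M'" by (rule PiM_cong) (auto simp: M'_def)
  have "sigma_finite_measure (M' i)" for i
    by (cases "i < n") (auto simp: M'_def prob prob_space_imp_sigma_finite
        sigma_finite_measure_count_space_finite)
  then interpret product_sigma_finite M' unfolding product_sigma_finite_def by blast
  have int': "\<And>i. i \<in> {..<n} \<Longrightarrow> integrable (M' i) (g i)" using int by (simp add: M'_def)
  show "integrable (PiM {..<n} M) (\<lambda>\<omega>. \<Prod>i<n. g i (\<omega> i))"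
    unfolding PiM_eq by (rule product_integrable_prod[OF _ int']) simp
  have "(\<integral>\<omega>. (\<Prod>i<n. g i (\<omega> i)) \<partial>PiM {..<n} M') = (\<Prod>i<n. integral\<^sup>L (M' i) (g i))"
    by (rule product_integral_prod[OF _ int']) simp
  then show "(\<integral>\<omega>. (\<Prod>i<n. g i (\<omega> i)) \<partial>PiM {..<n} M) = (\<Prod>i<n. integral\<^sup>L (M i) (g i))"
    unfolding PiM_eq by (simp add: M'_def)
qed

lemma prod_of_bool: "finite S \<Longrightarrow> (\<Prod>i\<in>S. of_bool (P i)) = (of_bool (\<forall>i\<in>S. P i) :: 'a :: comm_semiring_1)"
  by (induction S rule: finite_induct) auto

lemma pairing_iff_merge_idx:
  assumes k: "k1 \<in> basis_on d I" "k2 \<in> basis_on d I" "k3 \<in> basis_on d I" "k4 \<in> basis_on d I"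
    and x: "x \<subseteq> I"
  shows "((\<forall>i\<in>x. k1 i = k2 i \<and> k3 i = k4 i) \<and> (\<forall>i\<in>I - x. k1 i = k4 i \<and> k3 i = k2 i))
     \<longleftrightarrow> k2 = merge_idx x k1 k3 \<and> k4 = merge_idx x k3 k1"
proof
  assume pairing: "(\<forall>i\<in>x. k1 i = k2 i \<and> k3 i = k4 i) \<and> (\<forall>i\<in>I - x. k1 i = k4 i \<and> k3 i = k2 i)"
  show "k2 = merge_idx x k1 k3 \<and> k4 = merge_idx x k3 k1"
  proof (intro conjI ext)
    fix i
    show "k2 i = merge_idx x k1 k3 i"
      using pairing x basis_on_undefined[OF k(2), of i] basis_on_undefined[OF k(3), of i]
      by (cases "i \<in> I") (auto simp: merge_idx_def)
    show "k4 i = merge_idx x k3 k1 i"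
      using pairing x basis_on_undefined[OF k(4), of i] basis_on_undefined[OF k(1), of i]
      by (cases "i \<in> I") (auto simp: merge_idx_def)
  qed
qed (auto simp: merge_idx_def)

text \<open>By Wick's rule for each factor, the fourth moment of a product state is a sum over the
  ways of pairing the indices factor by factor; a pairing is recorded by the set x of
  factors on which k1 pairs with k2 (and k3 with k4), rather than k1 with k4.\<close>

lemma prod_moment4_formula:
  assumes M: "\<And>i. i < n \<Longrightarrow> unitarily_invariant_state_measure (d i) (M i)"
    and k: "k1 \<in> basis_on d {..<n}" "k2 \<in> basis_on d {..<n}" "k3 \<in> basis_on d {..<n}"
      "k4 \<in> basis_on d {..<n}"
  shows "(\<Prod>i<n. moment4 (M i) (k1 i) (k2 i) (k3 i) (k4 i)) =
    (\<Prod>i<n. 1 / (of_nat (d i) * (of_nat (d i) + 1))) *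
    (\<Sum>x\<in>Pow {..<n}. of_bool (k2 = merge_idx x k1 k3 \<and> k4 = merge_idx x k3 k1))"
proof -
  define A where "A i = (of_bool (k1 i = k2 i \<and> k3 i = k4 i) :: complex)" for i
  define B where "B i = (of_bool (k1 i = k4 i \<and> k3 i = k2 i) :: complex)" for i
  have "(\<Prod>i<n. moment4 (M i) (k1 i) (k2 i) (k3 i) (k4 i)) =
      (\<Prod>i<n. 1 / (of_nat (d i) * (of_nat (d i) + 1)) * (A i + B i))"
    using k by (intro prod.cong refl) (simp add: moment4_formula[OF M] basis_on_less A_def B_def)
  also have "\<dots> = (\<Prod>i<n. 1 / (of_nat (d i) * (of_nat (d i) + 1))) * (\<Prod>i<n. A i + B i)"
    by (rule prod.distrib)
  also have "(\<Prod>i<n. A i + B i) = (\<Sum>x\<in>Pow {..<n}. (\<Prod>i\<in>x. A i) * (\<Prod>i\<in>{..<n} - x. B i))"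
    by (rule prod_add) simp
  also have "\<dots> = (\<Sum>x\<in>Pow {..<n}. of_bool (k2 = merge_idx x k1 k3 \<and> k4 = merge_idx x k3 k1))"
  proof (rule sum.cong[OF refl])
    fix x assume x: "x \<in> Pow {..<n}"
    then have "finite x" by (auto intro: finite_subset)
    then have "(\<Prod>i\<in>x. A i) * (\<Prod>i\<in>{..<n} - x. B i) =
        of_bool ((\<forall>i\<in>x. k1 i = k2 i \<and> k3 i = k4 i) \<and> (\<forall>i\<in>{..<n} - x. k1 i = k4 i \<and> k3 i = k2 i))"
      unfolding A_def B_def by (simp add: prod_of_bool)
    then show "(\<Prod>i\<in>x. A i) * (\<Prod>i\<in>{..<n} - x. B i) =
        of_bool (k2 = merge_idx x k1 k3 \<and> k4 = merge_idx x k3 k1)"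
      using pairing_iff_merge_idx[OF k, of x] x by simp
  qed
  finally show ?thesis .
qed

lemma sum_indicator_collapse:
  fixes c :: "'k \<Rightarrow> 'k \<Rightarrow> 'k \<Rightarrow> 'k \<Rightarrow> 'a :: comm_semiring_1"
  assumes B: "finite B"
    and m: "\<And>x k1 k3. x \<in> X \<Longrightarrow> k1 \<in> B \<Longrightarrow> k3 \<in> B \<Longrightarrow> m1 x k1 k3 \<in> B \<and> m2 x k1 k3 \<in> B"
  shows "(\<Sum>k1\<in>B. \<Sum>k2\<in>B. \<Sum>k3\<in>B. \<Sum>k4\<in>B. c k1 k2 k3 k4 *
            (\<Sum>x\<in>X. of_bool (k2 = m1 x k1 k3 \<and> k4 = m2 x k1 k3)))
       = (\<Sum>x\<in>X. \<Sum>k1\<in>B. \<Sum>k3\<in>B. c k1 (m1 x k1 k3) k3 (m2 x k1 k3))"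
proof -
  have inner: "(\<Sum>k2\<in>B. \<Sum>k4\<in>B. c k1 k2 k3 k4 * of_bool (k2 = m1 x k1 k3 \<and> k4 = m2 x k1 k3))
      = c k1 (m1 x k1 k3) k3 (m2 x k1 k3)" if "x \<in> X" "k1 \<in> B" "k3 \<in> B" for x k1 k3
  proof -
    have "(\<Sum>k2\<in>B. \<Sum>k4\<in>B. c k1 k2 k3 k4 * of_bool (k2 = m1 x k1 k3 \<and> k4 = m2 x k1 k3))
        = (\<Sum>k2\<in>B. \<Sum>k4\<in>B. if k4 = m2 x k1 k3 then (if k2 = m1 x k1 k3 then c k1 k2 k3 k4 else 0) else 0)"
      by (intro sum.cong refl) auto
    also have "\<dots> = (\<Sum>k2\<in>B. if k2 = m1 x k1 k3 then c k1 k2 k3 (m2 x k1 k3) else 0)"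
      using m[OF that] B by (intro sum.cong refl) (simp add: sum.delta)
    also have "\<dots> = c k1 (m1 x k1 k3) k3 (m2 x k1 k3)"
      using m[OF that] B by (simp add: sum.delta)
    finally show ?thesis .
  qed
  have "(\<Sum>k1\<in>B. \<Sum>k2\<in>B. \<Sum>k3\<in>B. \<Sum>k4\<in>B. c k1 k2 k3 k4 *
            (\<Sum>x\<in>X. of_bool (k2 = m1 x k1 k3 \<and> k4 = m2 x k1 k3)))
      = (\<Sum>x\<in>X. \<Sum>k1\<in>B. \<Sum>k2\<in>B. \<Sum>k3\<in>B. \<Sum>k4\<in>B.
            c k1 k2 k3 k4 * of_bool (k2 = m1 x k1 k3 \<and> k4 = m2 x k1 k3))"
    by (simp only: sum_distrib_left sum.swap[of _ B X])
  also have "\<dots> = (\<Sum>x\<in>X. \<Sum>k1\<in>B. \<Sum>k3\<in>B. \<Sum>k2\<in>B. \<Sum>k4\<in>B.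
            c k1 k2 k3 k4 * of_bool (k2 = m1 x k1 k3 \<and> k4 = m2 x k1 k3))"
    by (rule sum.cong[OF refl], rule sum.cong[OF refl], rule sum.swap)
  also have "\<dots> = (\<Sum>x\<in>X. \<Sum>k1\<in>B. \<Sum>k3\<in>B. c k1 (m1 x k1 k3) k3 (m2 x k1 k3))"
    by (intro sum.cong refl inner)
  finally show ?thesis .
qed

definition sep_monomial4 :: "nat \<Rightarrow> (nat \<Rightarrow> nat) \<Rightarrow> (nat \<Rightarrow> nat) \<Rightarrow> (nat \<Rightarrow> nat) \<Rightarrow> (nat \<Rightarrow> nat)
    \<Rightarrow> (nat \<Rightarrow> nat \<Rightarrow> complex) \<Rightarrow> complex" where
  "sep_monomial4 n k1 k2 k3 k4 \<omega> =
    (\<Prod>i<n. \<omega> i (k1 i) * cnj (\<omega> i (k2 i)) * \<omega> i (k3 i) * cnj (\<omega> i (k4 i)))"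

lemma apply_op_sep_state_power4:
  "apply_op d n U (sep_state n \<omega>) j1 * cnj (apply_op d n U (sep_state n \<omega>) j2) *
   apply_op d n U (sep_state n \<omega>) j3 * cnj (apply_op d n U (sep_state n \<omega>) j4) =
   (\<Sum>k1\<in>basis_on d {..<n}. \<Sum>k2\<in>basis_on d {..<n}. \<Sum>k3\<in>basis_on d {..<n}. \<Sum>k4\<in>basis_on d {..<n}.
      U j1 k1 * cnj (U j2 k2) * U j3 k3 * cnj (U j4 k4) * sep_monomial4 n k1 k2 k3 k4 \<omega>)"
  unfolding apply_op_def sep_state_def sep_monomial4_def basis_idx_eq_basis_on cnj_sum four_sums_product
  by (simp add: prod.distrib mult_ac)

context
  fixes n :: nat and d :: "nat \<Rightarrow> nat" and M :: "nat \<Rightarrow> (nat \<Rightarrow> complex) measure"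
  assumes M: "\<And>i. i < n \<Longrightarrow> unitarily_invariant_state_measure (d i) (M i)"
begin

lemma prob_space_PiM_states: "prob_space (PiM {..<n} M)"
  using M by (intro prob_space_PiM) (auto simp: unitarily_invariant_state_measure_def)

lemma integral_sep_monomial4:
  assumes k: "k1 \<in> basis_on d {..<n}" "k2 \<in> basis_on d {..<n}" "k3 \<in> basis_on d {..<n}"
      "k4 \<in> basis_on d {..<n}"
  shows "integrable (PiM {..<n} M) (sep_monomial4 n k1 k2 k3 k4)"
    and "(\<integral>\<omega>. sep_monomial4 n k1 k2 k3 k4 \<omega> \<partial>PiM {..<n} M) =
      (\<Prod>i<n. 1 / (of_nat (d i) * (of_nat (d i) + 1))) *
      (\<Sum>x\<in>Pow {..<n}. of_bool (k2 = merge_idx x k1 k3 \<and> k4 = merge_idx x k3 k1))"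
proof -
  have prob: "\<And>i. i < n \<Longrightarrow> prob_space (M i)"
    using M unfolding unitarily_invariant_state_measure_def by auto
  note int = integrable_moment4_integrand[OF M]
  show "integrable (PiM {..<n} M) (sep_monomial4 n k1 k2 k3 k4)"
    unfolding sep_monomial4_def[abs_def] using integral_PiM_prod(1)[OF prob int] by simp
  have "(\<integral>\<omega>. sep_monomial4 n k1 k2 k3 k4 \<omega> \<partial>PiM {..<n} M) =
      (\<Prod>i<n. moment4 (M i) (k1 i) (k2 i) (k3 i) (k4 i))"
    unfolding sep_monomial4_def moment4_def using integral_PiM_prod(2)[OF prob int] by simp
  also have "\<dots> = (\<Prod>i<n. 1 / (of_nat (d i) * (of_nat (d i) + 1))) *
      (\<Sum>x\<in>Pow {..<n}. of_bool (k2 = merge_idx x k1 k3 \<and> k4 = merge_idx x k3 k1))"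
    by (rule prod_moment4_formula[OF M k])
  finally show "(\<integral>\<omega>. sep_monomial4 n k1 k2 k3 k4 \<omega> \<partial>PiM {..<n} M) =
      (\<Prod>i<n. 1 / (of_nat (d i) * (of_nat (d i) + 1))) *
      (\<Sum>x\<in>Pow {..<n}. of_bool (k2 = merge_idx x k1 k3 \<and> k4 = merge_idx x k3 k1))" .
qed

lemma integral_apply_op_sep_state_power4:
  shows "integrable (PiM {..<n} M) (\<lambda>\<omega>.
      apply_op d n U (sep_state n \<omega>) j1 * cnj (apply_op d n U (sep_state n \<omega>) j2) *
      apply_op d n U (sep_state n \<omega>) j3 * cnj (apply_op d n U (sep_state n \<omega>) j4))"
    and "(\<integral>\<omega>. apply_op d n U (sep_state n \<omega>) j1 * cnj (apply_op d n U (sep_state n \<omega>) j2) *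
      apply_op d n U (sep_state n \<omega>) j3 * cnj (apply_op d n U (sep_state n \<omega>) j4) \<partial>PiM {..<n} M) =
    (\<Prod>i<n. 1 / (of_nat (d i) * (of_nat (d i) + 1))) *
    (\<Sum>x\<in>Pow {..<n}. \<Sum>k1\<in>basis_on d {..<n}. \<Sum>k3\<in>basis_on d {..<n}.
        U j1 k1 * cnj (U j2 (merge_idx x k1 k3)) * U j3 k3 * cnj (U j4 (merge_idx x k3 k1)))"
proof -
  let ?B = "basis_on d {..<n}"
  let ?C = "\<Prod>i<n. 1 / (of_nat (d i) * (of_nat (d i) + 1)) :: complex"
  let ?c = "\<lambda>k1 k2 k3 k4. U j1 k1 * cnj (U j2 k2) * U j3 k3 * cnj (U j4 k4)"
  show "integrable (PiM {..<n} M) (\<lambda>\<omega>.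
      apply_op d n U (sep_state n \<omega>) j1 * cnj (apply_op d n U (sep_state n \<omega>) j2) *
      apply_op d n U (sep_state n \<omega>) j3 * cnj (apply_op d n U (sep_state n \<omega>) j4))"
    unfolding apply_op_sep_state_power4 by (simp add: integral_sep_monomial4(1))
  have "(\<integral>\<omega>. apply_op d n U (sep_state n \<omega>) j1 * cnj (apply_op d n U (sep_state n \<omega>) j2) *
      apply_op d n U (sep_state n \<omega>) j3 * cnj (apply_op d n U (sep_state n \<omega>) j4) \<partial>PiM {..<n} M) =
    (\<Sum>k1\<in>?B. \<Sum>k2\<in>?B. \<Sum>k3\<in>?B. \<Sum>k4\<in>?B. ?c k1 k2 k3 k4 *
      (?C * (\<Sum>x\<in>Pow {..<n}. of_bool (k2 = merge_idx x k1 k3 \<and> k4 = merge_idx x k3 k1))))"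
    unfolding apply_op_sep_state_power4 by (simp add: integral_sep_monomial4 del: sum_of_bool_eq)
  also have "\<dots> = ?C * (\<Sum>k1\<in>?B. \<Sum>k2\<in>?B. \<Sum>k3\<in>?B. \<Sum>k4\<in>?B. ?c k1 k2 k3 k4 *
      (\<Sum>x\<in>Pow {..<n}. of_bool (k2 = merge_idx x k1 k3 \<and> k4 = merge_idx x k3 k1)))"
    by (simp only: mult.left_commute[of _ ?C] sum_distrib_left)
  also have "\<dots> = ?C * (\<Sum>x\<in>Pow {..<n}. \<Sum>k1\<in>?B. \<Sum>k3\<in>?B.
      ?c k1 (merge_idx x k1 k3) k3 (merge_idx x k3 k1))"
    by (subst sum_indicator_collapse) (auto intro: merge_idx_in_basis_on')
  finally show "(\<integral>\<omega>. apply_op d n U (sep_state n \<omega>) j1 * cnj (apply_op d n U (sep_state n \<omega>) j2) *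
      apply_op d n U (sep_state n \<omega>) j3 * cnj (apply_op d n U (sep_state n \<omega>) j4) \<partial>PiM {..<n} M) =
    ?C * (\<Sum>x\<in>Pow {..<n}. \<Sum>k1\<in>?B. \<Sum>k3\<in>?B.
        U j1 k1 * cnj (U j2 (merge_idx x k1 k3)) * U j3 k3 * cnj (U j4 (merge_idx x k3 k1)))" .
qed

lemma integral_purity_sep_state:
  shows "integrable (PiM {..<n} M) (\<lambda>\<omega>. purity d n p (apply_op d n U (sep_state n \<omega>)))"
    and "(\<integral>\<omega>. purity d n p (apply_op d n U (sep_state n \<omega>)) \<partial>PiM {..<n} M) =
      (\<Prod>i<n. 1 / (real (d i) * (real (d i) + 1))) * (\<Sum>x\<in>Pow {..<n}. Re (operator_purity d n U p x))"
proof -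
  let ?Bq = "basis_on d ({..<n} - p)" and ?Bp = "basis_on d p" and ?B = "basis_on d {..<n}"
  define C where "C = (\<Prod>i<n. 1 / (real (d i) * (real (d i) + 1)))"
  define \<psi> where "\<psi> \<omega> = apply_op d n U (sep_state n \<omega>)" for \<omega>
  define P where "P \<omega> = (\<Sum>b\<in>?Bq. \<Sum>b'\<in>?Bq. \<Sum>a\<in>?Bp. \<Sum>a'\<in>?Bp. \<psi> \<omega> (merge_idx p a b) *
      cnj (\<psi> \<omega> (merge_idx p a b')) * \<psi> \<omega> (merge_idx p a' b') * cnj (\<psi> \<omega> (merge_idx p a' b)))" for \<omega>
  have purity_eq: "purity d n p (apply_op d n U (sep_state n \<omega>)) = Re (P \<omega>)" for \<omega>
    unfolding P_def \<psi>_def by (rule purity_expand)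
  note moment = integral_apply_op_sep_state_power4
  have int: "integrable (PiM {..<n} M) P"
    unfolding P_def \<psi>_def by (simp add: moment(1))
  then show "integrable (PiM {..<n} M) (\<lambda>\<omega>. purity d n p (apply_op d n U (sep_state n \<omega>)))"
    unfolding purity_eq by simp
  have "(\<Prod>i<n. 1 / (of_nat (d i) * (of_nat (d i) + 1))) = complex_of_real C"
    by (simp add: C_def)
  then have "integral\<^sup>L (PiM {..<n} M) P = (\<Sum>b\<in>?Bq. \<Sum>b'\<in>?Bq. \<Sum>a\<in>?Bp. \<Sum>a'\<in>?Bp.
      complex_of_real C * (\<Sum>x\<in>Pow {..<n}. \<Sum>k1\<in>?B. \<Sum>k3\<in>?B.
        U (merge_idx p a b) k1 * cnj (U (merge_idx p a b') (merge_idx x k1 k3)) *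
        U (merge_idx p a' b') k3 * cnj (U (merge_idx p a' b) (merge_idx x k3 k1))))"
    unfolding P_def \<psi>_def by (simp add: moment)
  also have "\<dots> = complex_of_real C * (\<Sum>x\<in>Pow {..<n}. operator_purity d n U p x)"
    unfolding operator_purity_def
    by (simp only: sum_distrib_left[symmetric] sum.swap[of _ _ "Pow {..<n}"])
  finally show "(\<integral>\<omega>. purity d n p (apply_op d n U (sep_state n \<omega>)) \<partial>PiM {..<n} M) =
      C * (\<Sum>x\<in>Pow {..<n}. Re (operator_purity d n U p x))"
    unfolding purity_eq integral_Re[OF int] by (simp add: Re_sum)
qed

lemma integrable_tau_bip_sep_state:
  shows "integrable (PiM {..<n} M) (\<lambda>\<omega>. tau_bip d n p (apply_op d n U (sep_state n \<omega>)))"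
proof -
  interpret prob_space "PiM {..<n} M" by (rule prob_space_PiM_states)
  show ?thesis unfolding tau_bip_def using integral_purity_sep_state(1) by simp
qed

lemma eps_bip_eq:
  shows "eps_bip d n M U p = 2 - 2 * (\<integral>\<omega>. purity d n p (apply_op d n U (sep_state n \<omega>)) \<partial>PiM {..<n} M)"
proof -
  interpret prob_space "PiM {..<n} M" by (rule prob_space_PiM_states)
  show ?thesis
    unfolding eps_bip_def tau_bip_def using integral_purity_sep_state(1)
    by (simp add: prob_space)
qed

end

lemma eps_tilde_bip_eq:
  assumes d: "\<And>i. i < n \<Longrightarrow> 1 \<le> d i" and p: "p \<subseteq> {..<n}"
  shows "eps_tilde_bip d n p = 2 - 2 * (\<Prod>i<n. 1 / (real (d i) * (real (d i) + 1))) *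
    (\<Sum>x\<in>Pow {..<n}. (\<Prod>i<n. real (d i))\<^sup>2 / real (cut_dim d n p x))"
proof -
  have "(real (cut_dim d n p x) - 1) / real (cut_dim d n p x) = 1 - 1 / real (cut_dim d n p x)"
    if "x \<in> Pow {..<n}" for x
  proof -
    have "1 \<le> cut_dim d n p x" using that by (intro cut_dim_pos[OF d p]) auto
    then show ?thesis by (simp add: diff_divide_distrib)
  qed
  then have "(\<Sum>x\<in>Pow {..<n}. (real (cut_dim d n p x) - 1) / real (cut_dim d n p x)) =
      2 ^ n - (\<Sum>x\<in>Pow {..<n}. 1 / real (cut_dim d n p x))"
    by (simp add: sum_subtractf card_Pow)
  moreover have "(\<Prod>i<n. real (d i) / (real (d i) + 1)) =
      (\<Prod>i<n. 1 / (real (d i) * (real (d i) + 1)) * (real (d i))\<^sup>2)"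
    using d by (intro prod.cong refl) (simp add: power2_eq_square)
  then have "(\<Prod>i<n. real (d i) / (real (d i) + 1)) =
      (\<Prod>i<n. 1 / (real (d i) * (real (d i) + 1))) * (\<Prod>i<n. real (d i))\<^sup>2"
    by (simp only: prod.distrib prod_power_distrib)
  ultimately show ?thesis
    unfolding eps_tilde_bip_def Let_def cut_dim_def[symmetric] by (simp add: sum_distrib_left mult.assoc)
qed

lemma eps_bip_le_eps_tilde_bip:
  assumes d: "\<And>i. i < n \<Longrightarrow> 1 \<le> d i"
    and M: "\<And>i. i < n \<Longrightarrow> unitarily_invariant_state_measure (d i) (M i)"
    and U: "unitary_op d n U" and p: "p \<subseteq> {..<n}"
  shows "eps_bip d n M U p \<le> eps_tilde_bip d n p"
proof -
  define C where "C = (\<Prod>i<n. 1 / (real (d i) * (real (d i) + 1)))"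
  have "0 \<le> C" unfolding C_def by (intro prod_nonneg) auto
  have "eps_bip d n M U p = 2 - 2 * (C * (\<Sum>x\<in>Pow {..<n}. Re (operator_purity d n U p x)))"
    unfolding C_def by (simp only: eps_bip_eq[OF M] integral_purity_sep_state(2)[OF M])
  also have "\<dots> \<le> 2 - 2 * (C * (\<Sum>x\<in>Pow {..<n}. (\<Prod>i<n. real (d i))\<^sup>2 / real (cut_dim d n p x)))"
    using operator_purity_lower_bound[OF U p] \<open>0 \<le> C\<close> by (auto intro!: mult_left_mono sum_mono)
  also have "\<dots> = eps_tilde_bip d n p"
    by (simp only: eps_tilde_bip_eq[OF d p] C_def mult.assoc)
  finally show ?thesis .
qed
theorem theorem5:
  fixes n :: nat and d :: "nat \<Rightarrow> nat"
    and M :: "nat \<Rightarrow> (nat \<Rightarrow> complex) measure"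
    and U :: "(nat \<Rightarrow> nat) \<Rightarrow> (nat \<Rightarrow> nat) \<Rightarrow> complex"
  assumes "n \<ge> 2"
    and "\<And>i. i < n \<Longrightarrow> d i \<ge> 1"
    and "\<And>i. i < n \<Longrightarrow> unitarily_invariant_state_measure (d i) (M i)"
    and "unitary_op d n U"
  shows "(\<forall>p. nontrivial_bip n p \<longrightarrow> eps_bip d n M U p \<le> eps_tilde_bip d n p)
         \<and> eps_one d n M U \<le> eps_tilde_one d n"
proof
  note d = assms(2) and M = assms(3) and U = assms(4)
  show "\<forall>p. nontrivial_bip n p \<longrightarrow> eps_bip d n M U p \<le> eps_tilde_bip d n p"
    using eps_bip_le_eps_tilde_bip[OF d M U] unfolding nontrivial_bip_def by blast
  have "eps_one d n M U = 1 / (2 ^ (n - 1) - 1) * (\<Sum>p\<in>unordered_bips n. eps_bip d n M U p)"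
    unfolding eps_one_def one_tangle_def eps_bip_def
    by (simp add: integrable_tau_bip_sep_state[OF M])
  also have "\<dots> \<le> 1 / (2 ^ (n - 1) - 1) * (\<Sum>p\<in>unordered_bips n. eps_tilde_bip d n p)"
    using eps_bip_le_eps_tilde_bip[OF d M U]
    by (intro mult_left_mono sum_mono) (auto simp: unordered_bips_def)
  finally show "eps_one d n M U \<le> eps_tilde_one d n"
    unfolding eps_tilde_one_def .
qed

end
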